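(* Let $n\ge1$, let $\mathfrak{n}=\mathfrak{n}(n)$, $\operatorname{Der}(\mathfrak{n})_1$, $B$ and $\mathfrak{B}(B)$ be as in the context, and let $D\in\operatorname{Der}(\mathfrak{n})_1$. For $v\in\mathfrak{B}(B)$ let $\lambda_v$ denote the diagonal coefficient of the matrix of $D$ in the basis $\mathfrak{B}(B)$ corresponding to $v$ (i.e. the $v$-coordinate of $D(v)$). Then: (a) $\lambda_{e'_i}=0$ for $1\le i\le n$; (b) $\lambda_a=\lambda_b=\lambda_x$; (c) $\lambda_h=\lambda_f=3\lambda_a$; (d) $\lambda_y=\lambda_u=\lambda_c=2\lambda_a$.
   Context: Fix a field of characteristic zero and a positive integer $n$. The Lie algebra $\mathfrak{n}(n)$ has basis $e_1,\dots,e_n,a,b,x$; $u,y$; $e_i\wedge e_j$ ($1\le i<j\le n$); $c$; $x_1,\dots,x_n$; $u_1,\dots,u_n$; $y_1,\dots,y_n$; $f,h$. Its bracket is defined on basis elements by: $[e_i,e_j]=e_i\wedge e_j$ for $i<j$ (so $[e_j,e_i]=-e_i\wedge e_j$), $[e_i,x]=x_i$, $[e_i,u]=u_i$, $[e_i,y]=y_i$, $[a,b]=c$, $[a,y]=f$, $[a,c]=h$, $[b,u]=h$, $[b,y]=h$, $[x,u]=f$, $[x,y]=h$, extended by antisymmetry, and all other brackets of pairs of basis elements are zero. Let $E=\operatorname{span}\{e_1,\dots,e_n\}$ and let $W$ be the span of all the other basis vectors. Let $\operatorname{Der}(\mathfrak{n})_1$ be the set of derivations $D$ of $\mathfrak{n}$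 with $D(E)\subset W$. For a basis $B=\{e'_1,\dots,e'_n\}$ of $E$, put $x'_i=[e'_i,x]$, $u'_i=[e'_i,u]$, $y'_i=[e'_i,y]$, $e'_i\wedge e'_j=[e'_i,e'_j]$, and let $\mathfrak{B}(B)$ be the ordered basis $e'_1,\dots,e'_n,a,b,x,u,y,(e'_i\wedge e'_j)_{1\le i<j\le n}$ (lexicographic order), $c,x'_1,\dots,x'_n,u'_1,\dots,u'_n,y'_1,\dots,y'_n,f,h$. *)

theory Defs
  imports Main
begin

text \<open>Basis indices of the Lie algebra n(n).  E i = e_i, W i j = e_i wedge e_j,
  XI i = x_i, UI i = u_i, YI i = y_i; indices are 1-based.\<close>
datatype idx = E nat | A | B | X | U | Y | W nat nat | C | XI nat | UI nat | YI nat | F | H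

definition valid :: "nat \<Rightarrow> idx set" where
  "valid n = {E i | i. 1 \<le> i \<and> i \<le> n} \<union> {A, B, X, U, Y, C, F, H}
     \<union> {W i j | i j. 1 \<le> i \<and> i < j \<and> j \<le> n}
     \<union> {XI i | i. 1 \<le> i \<and> i \<le> n} \<union> {UI i | i. 1 \<le> i \<and> i \<le> n}
     \<union> {YI i | i. 1 \<le> i \<and> i \<le> n}"

text \<open>Brackets [p,q] = r of basis elements as listed in the definition (one orientation).\<close>
fun pos :: "idx \<Rightarrow> idx \<Rightarrow> idx option" where
  "pos (E i) (E j) = (if i < j then Some (W i j) else None)"
| "pos (E i) X = Some (XI i)"
| "pos (E i) U = Some (UI i)"
| "pos (E i) Y = Some (YI i)"
| "pos A B = Some C"
| "pos A Y = Some F"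
| "pos A C = Some H"
| "pos B U = Some H"
| "pos B Y = Some H"
| "pos X U = Some F"
| "pos X Y = Some H"
| "pos _ _ = None"

definition unitv :: "idx \<Rightarrow> idx \<Rightarrow> 'k::field" where
  "unitv r = (\<lambda>k. if k = r then 1 else 0)"

definition brb :: "idx \<Rightarrow> idx \<Rightarrow> idx \<Rightarrow> 'k::field" where
  "brb p q = (case pos p q of Some r \<Rightarrow> unitv r
              | None \<Rightarrow> (case pos q p of Some r \<Rightarrow> (\<lambda>k. - unitv r k) | None \<Rightarrow> (\<lambda>k. 0)))"

definition vec :: "nat \<Rightarrow> (idx \<Rightarrow> 'k::field) set" where
  "vec n = {v. \<forall>k. k \<notin> valid n \<longrightarrow> v k = 0}"

definition bracket :: "nat \<Rightarrow> (idx \<Rightarrow> 'k::field) \<Rightarrow> (idx \<Rightarrow> 'k) \<Rightarrow> idx \<Rightarrow> 'k" where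
  "bracket n v w = (\<lambda>k. \<Sum>p\<in>valid n. \<Sum>q\<in>valid n. v p * w q * brb p q k)"

definition is_E :: "idx \<Rightarrow> bool" where
  "is_E k \<longleftrightarrow> (\<exists>i. k = E i)"

definition Espace :: "nat \<Rightarrow> (idx \<Rightarrow> 'k::field) set" where
  "Espace n = {v \<in> vec n. \<forall>k. \<not> is_E k \<longrightarrow> v k = 0}"

definition is_derivation :: "nat \<Rightarrow> ((idx \<Rightarrow> 'k::field) \<Rightarrow> (idx \<Rightarrow> 'k)) \<Rightarrow> bool" where
  "is_derivation n D \<longleftrightarrow>
     (\<forall>v\<in>vec n. D v \<in> vec n)
   \<and> (\<forall>v\<in>vec n. \<forall>w\<in>vec n. \<forall>c. D (\<lambda>k. v k + c * w k) = (\<lambda>k. D v k + c * D w k))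
   \<and> (\<forall>v\<in>vec n. \<forall>w\<in>vec n. D (bracket n v w) = (\<lambda>k. bracket n (D v) w k + bracket n v (D w) k))"

text \<open>Der(n)_1: derivations with D(E) contained in W (W = span of the non-E basis vectors).\<close>
definition Der1 :: "nat \<Rightarrow> ((idx \<Rightarrow> 'k::field) \<Rightarrow> (idx \<Rightarrow> 'k)) \<Rightarrow> bool" where
  "Der1 n D \<longleftrightarrow> is_derivation n D \<and> (\<forall>v\<in>Espace n. \<forall>k. is_E k \<longrightarrow> D v k = 0)"

definition is_Ebasis :: "nat \<Rightarrow> (nat \<Rightarrow> idx \<Rightarrow> 'k::field) \<Rightarrow> bool" where
  "is_Ebasis n ep \<longleftrightarrow>
     (\<forall>i\<in>{1..n}. ep i \<in> Espace n)
   \<and> (\<forall>c. (\<forall>k. (\<Sum>i=1..n. c i * ep i k) = 0) \<longrightarrow> (\<forall>i\<in>{1..n}. c i = 0))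
   \<and> (\<forall>v\<in>Espace n. \<exists>c. v = (\<lambda>k. \<Sum>i=1..n. c i * ep i k))"

text \<open>The basis frakB(B), indexed by the same index set as the standard basis.\<close>
fun newbasis :: "nat \<Rightarrow> (nat \<Rightarrow> idx \<Rightarrow> 'k::field) \<Rightarrow> idx \<Rightarrow> idx \<Rightarrow> 'k" where
  "newbasis n ep (E i) = ep i"
| "newbasis n ep (W i j) = bracket n (ep i) (ep j)"
| "newbasis n ep (XI i) = bracket n (ep i) (unitv X)"
| "newbasis n ep (UI i) = bracket n (ep i) (unitv U)"
| "newbasis n ep (YI i) = bracket n (ep i) (unitv Y)"
| "newbasis n ep r = unitv r"

definition coord :: "nat \<Rightarrow> (nat \<Rightarrow> idx \<Rightarrow> 'k::field) \<Rightarrow> (idx \<Rightarrow> 'k) \<Rightarrow> idx \<Rightarrow> 'k" where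
  "coord n ep w r = (THE c. (\<forall>k. k \<notin> valid n \<longrightarrow> c k = 0)
        \<and> w = (\<lambda>k. \<Sum>j\<in>valid n. c j * newbasis n ep j k)) r"

definition diagc :: "nat \<Rightarrow> (nat \<Rightarrow> idx \<Rightarrow> 'k::field) \<Rightarrow> ((idx \<Rightarrow> 'k) \<Rightarrow> (idx \<Rightarrow> 'k)) \<Rightarrow> idx \<Rightarrow> 'k" where
  "diagc n ep D r = coord n ep (D (newbasis n ep r)) r"

end

theory Submission
  imports Defs
begin

text \<open>Since \<open>\<frakB>(B)\<close> is a basis, the diagonal entry of D at a, b, x, u, y, c, f, h is the
  standard coordinate of D applied to that basis vector, because no other vector of \<open>\<frakB>(B)\<close> has
  a component there; at \<open>e'\<^sub>i\<close> it vanishes, because \<open>D(E) \<subseteq> W\<close> and the \<open>e'\<^sub>i\<close> are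
  independent.  \<open>\<frakB>(B)\<close> is a basis because the change of basis \<open>e \<mapsto> e'\<close> induces the same change
  on the \<open>x\<^sub>i\<close>, \<open>u\<^sub>i\<close>, \<open>y\<^sub>i\<close> and its exterior square on the \<open>e\<^sub>i \<and> e\<^sub>j\<close>.
  Applying the Leibniz rule to \<open>[a,b] = c\<close>, \<open>[a,c] = [b,u] = [b,y] = [x,y] = h\<close> and
  \<open>[a,y] = [x,u] = f\<close> and comparing coordinates gives seven linear relations between the
  diagonal entries, once the off-diagonal entries occurring in them are shown to vanish using the
  zero brackets \<open>[e\<^sub>1,a]\<close>, \<open>[e\<^sub>1,b]\<close>, \<open>[a,u]\<close>, \<open>[a,x]\<close>, \<open>[b,x]\<close>, \<open>[x,c]\<close> and the equality
  \<open>[x,y] = [a,c]\<close>.\<close>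

section \<open>Brackets of basis vectors\<close>

definition bracket_support :: "idx \<Rightarrow> (idx \<times> idx) set" where
  "bracket_support k = (case k of
      W i j \<Rightarrow> {(E i, E j), (E j, E i)}
    | XI i \<Rightarrow> {(E i, X), (X, E i)}
    | UI i \<Rightarrow> {(E i, U), (U, E i)}
    | YI i \<Rightarrow> {(E i, Y), (Y, E i)}
    | C \<Rightarrow> {(A, B), (B, A)}
    | F \<Rightarrow> {(A, Y), (Y, A), (X, U), (U, X)}
    | H \<Rightarrow> {(A, C), (C, A), (B, U), (U, B), (B, Y), (Y, B), (X, Y), (Y, X)}
    | _ \<Rightarrow> {})"

lemma pos_in_bracket_support:
  "pos p q = Some r \<Longrightarrow> (p, q) \<in> bracket_support r \<and> (q, p) \<in> bracket_support r"
  by (cases p; cases q; auto simp: bracket_support_def split: if_splits)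

lemma brb_nonzero_imp_bracket_support:
  "brb p q k \<noteq> (0::'k::field) \<Longrightarrow> (p, q) \<in> bracket_support k"
  unfolding brb_def
  by (auto simp: unitv_def split: option.splits if_splits dest: pos_in_bracket_support)

lemma brb_antisym: "brb q p k = - (brb p q k :: 'k::field)"
  unfolding brb_def by (cases p; cases q; auto simp: unitv_def)

lemma brb_simps:
  "brb A B = unitv C" "brb A Y = unitv F" "brb X U = unitv F" "brb X Y = unitv H"
  "brb A C = unitv H" "brb B U = unitv H" "brb B Y = unitv H"
  "brb (E i) X = unitv (XI i)" "brb (E i) U = unitv (UI i)" "brb (E i) Y = unitv (YI i)"
  "brb A X = (\<lambda>k. 0)" "brb A U = (\<lambda>k. 0)" "brb B X = (\<lambda>k. 0)" "brb X C = (\<lambda>k. 0)"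
  "brb (E i) A = (\<lambda>k. 0)" "brb (E i) B = (\<lambda>k. 0)"
  by (simp_all add: brb_def)

lemma valid_eq_images:
  "valid n = E ` {1..n} \<union> {A, B, X, U, Y, C, F, H}
     \<union> (\<lambda>(i, j). W i j) ` {(i, j). 1 \<le> i \<and> i < j \<and> j \<le> n}
     \<union> XI ` {1..n} \<union> UI ` {1..n} \<union> YI ` {1..n}"
  unfolding valid_def by auto

lemma wedge_indices_eq:
  "{(i::nat, j). 1 \<le> i \<and> i < j \<and> j \<le> n} = {x \<in> {1..n} \<times> {1..n}. fst x < snd x}"
  by auto

lemma finite_valid [simp]: "finite (valid n)"
  unfolding valid_eq_images wedge_indices_eq by auto

lemma in_valid_iff [simp]:
  "A \<in> valid n" "B \<in> valid n" "X \<in> valid n" "U \<in> valid n"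
  "Y \<in> valid n" "C \<in> valid n" "F \<in> valid n" "H \<in> valid n"
  "E i \<in> valid n \<longleftrightarrow> 1 \<le> i \<and> i \<le> n"
  "XI i \<in> valid n \<longleftrightarrow> 1 \<le> i \<and> i \<le> n"
  "UI i \<in> valid n \<longleftrightarrow> 1 \<le> i \<and> i \<le> n"
  "YI i \<in> valid n \<longleftrightarrow> 1 \<le> i \<and> i \<le> n"
  "W i j \<in> valid n \<longleftrightarrow> 1 \<le> i \<and> i < j \<and> j \<le> n"
  by (auto simp: valid_def)

lemma sum_valid:
  "sum g (valid n) = (\<Sum>i=1..n. g (E i)) + (\<Sum>i=1..n. g (XI i)) + (\<Sum>i=1..n. g (UI i))
     + (\<Sum>i=1..n. g (YI i)) + (\<Sum>i=1..n. \<Sum>j=1..n. if i < j then g (W i j) else 0)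
     + (g A + g B + g X + g U + g Y + g C + g F + g H)"
proof -
  let ?L = "{(i, j). 1 \<le> i \<and> i < j \<and> j \<le> (n::nat)}"
  have sum_W: "sum g ((\<lambda>(i, j). W i j) ` ?L) = (\<Sum>i=1..n. \<Sum>j=1..n. if i < j then g (W i j) else 0)"
  proof -
    have "sum g ((\<lambda>(i, j). W i j) ` ?L) = (\<Sum>x\<in>?L. g (W (fst x) (snd x)))"
      by (subst sum.reindex) (auto simp: inj_on_def case_prod_beta)
    also have "\<dots> = (\<Sum>x\<in>{1..n} \<times> {1..n}. if fst x < snd x then g (W (fst x) (snd x)) else 0)"
      unfolding wedge_indices_eq by (subst sum.inter_filter) auto
    finally show ?thesis by (simp add: sum.cartesian_product case_prod_beta)
  qed
  have finite_L: "finite ?L" unfolding wedge_indices_eq by auto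
  have "sum g (valid n) = sum g (E ` {1..n}) + sum g {A, B, X, U, Y, C, F, H}
      + sum g ((\<lambda>(i, j). W i j) ` ?L) + sum g (XI ` {1..n}) + sum g (UI ` {1..n}) + sum g (YI ` {1..n})"
    unfolding valid_eq_images
    by (subst sum.union_disjoint, (use finite_L in auto)[3])+ simp
  moreover have "sum g (T ` {1..n}) = (\<Sum>i=1..n. g (T i))" if "T \<in> {E, XI, UI, YI}" for T
    using that by (subst sum.reindex) (auto simp: inj_on_def)
  ultimately show ?thesis using sum_W by (simp add: algebra_simps)
qed

lemma bracket_eq_sum_bracket_support:
  "bracket n v w k =
     (\<Sum>(p, q)\<in>(valid n \<times> valid n) \<inter> bracket_support k. v p * w q * (brb p q k :: 'k::field))"
proof -
  have "bracket n v w k = (\<Sum>(p, q)\<in>valid n \<times> valid n. v p * w q * (brb p q k :: 'k))"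
    unfolding bracket_def by (simp add: sum.cartesian_product)
  also have "\<dots> = (\<Sum>(p, q)\<in>(valid n \<times> valid n) \<inter> bracket_support k. v p * w q * brb p q k)"
    by (rule sum.mono_neutral_right) (auto dest: brb_nonzero_imp_bracket_support)
  finally show ?thesis .
qed

lemma bracket_at_pair:
  assumes "(valid n \<times> valid n) \<inter> bracket_support k = {(p, q), (q, p)}"
    and "brb p q = (unitv k :: idx \<Rightarrow> 'k::field)" and "p \<noteq> q"
  shows "bracket n v w k = v p * w q - v q * (w p :: 'k)"
proof -
  have "brb p q k = (1 :: 'k)" using fun_cong[OF assms(2), of k] by (simp add: unitv_def)
  moreover from this have "brb q p k = (-1 :: 'k)" by (simp add: brb_antisym[of q p])
  ultimately show ?thesis using assms(1,3) by (simp add: bracket_eq_sum_bracket_support)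
qed

lemma bracket_at_C: "bracket n v w C = v A * w B - v B * (w A :: 'k::field)"
  by (rule bracket_at_pair) (auto simp: bracket_support_def brb_simps)

lemma bracket_at_F: "bracket n v w F = v A * w Y - v Y * w A + v X * w U - v U * (w X :: 'k::field)"
proof -
  have "(valid n \<times> valid n) \<inter> bracket_support F = {(A, Y), (Y, A), (X, U), (U, X)}"
    by (auto simp: bracket_support_def)
  then show ?thesis
    by (simp add: bracket_eq_sum_bracket_support brb_simps brb_antisym[of Y] brb_antisym[of U]
        unitv_def)
qed

lemma bracket_at_H:
  "bracket n v w H = v A * w C - v C * w A + v B * w U - v U * w B + v B * w Y - v Y * w B
     + v X * w Y - v Y * (w X :: 'k::field)"
proof -
  have "(valid n \<times> valid n) \<inter> bracket_support H
      = {(A, C), (C, A), (B, U), (U, B), (B, Y), (Y, B), (X, Y), (Y, X)}"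
    by (auto simp: bracket_support_def)
  then show ?thesis
    by (simp add: bracket_eq_sum_bracket_support brb_simps brb_antisym[of C] brb_antisym[of U]
        brb_antisym[of Y] unitv_def)
qed

lemma bracket_at_XI_UI_YI:
  assumes "1 \<le> i" "i \<le> n"
  shows "bracket n v w (XI i) = v (E i) * w X - v X * (w (E i) :: 'k::field)"
    and "bracket n v w (UI i) = v (E i) * w U - v U * (w (E i) :: 'k::field)"
    and "bracket n v w (YI i) = v (E i) * w Y - v Y * (w (E i) :: 'k::field)"
  using assms by (auto intro!: bracket_at_pair simp: bracket_support_def brb_simps)

lemma bracket_at_W:
  assumes "1 \<le> i" "i < j" "j \<le> n"
  shows "bracket n v w (W i j) = v (E i) * w (E j) - v (E j) * (w (E i) :: 'k::field)"
  using assms by (intro bracket_at_pair) (auto simp: bracket_support_def brb_def unitv_def)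

lemma bracket_at_generator:
  "bracket n v w (E i) = 0" "bracket n v w A = 0" "bracket n v w B = 0"
  "bracket n v w X = 0" "bracket n v w U = (0 :: 'k::field)" "bracket n v w Y = 0"
  by (simp_all add: bracket_eq_sum_bracket_support bracket_support_def)

lemmas bracket_at =
  bracket_at_C bracket_at_F bracket_at_H bracket_at_XI_UI_YI bracket_at_W bracket_at_generator

lemma bracket_antisym: "bracket n w v k = - (bracket n v w k :: 'k::field)"
proof -
  have "bracket n w v k = (\<Sum>p\<in>valid n. \<Sum>q\<in>valid n. w q * v p * brb q p k)"
    unfolding bracket_def by (rule sum.swap)
  also have "\<dots> = (\<Sum>p\<in>valid n. \<Sum>q\<in>valid n. - (v p * w q * brb p q k))"
    by (intro sum.cong refl) (subst brb_antisym, simp)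
  finally show ?thesis unfolding bracket_def by (simp add: sum_negf)
qed

lemma bracket_self: "bracket n v v k = (0 :: 'k::field_char_0)"
  using bracket_antisym[of n v v k] by simp

lemma bracket_sum_left:
  "bracket n (\<lambda>k. \<Sum>i\<in>I. a i * f i k) w k = (\<Sum>i\<in>I. a i * bracket n (f i) w k :: 'k::field)"
proof -
  have "bracket n (\<lambda>k. \<Sum>i\<in>I. a i * f i k) w k
      = (\<Sum>p\<in>valid n. \<Sum>q\<in>valid n. \<Sum>i\<in>I. a i * (f i p * w q * brb p q k))"
    unfolding bracket_def by (simp add: sum_distrib_right mult.assoc)
  also have "\<dots> = (\<Sum>i\<in>I. \<Sum>p\<in>valid n. \<Sum>q\<in>valid n. a i * (f i p * w q * brb p q k))"
    by (subst sum.swap) (simp add: sum.swap[of _ I])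
  finally show ?thesis
    unfolding bracket_def by (simp add: sum_distrib_left)
qed

lemma bracket_sum_right:
  "bracket n v (\<lambda>k. \<Sum>i\<in>I. a i * f i k) k = (\<Sum>i\<in>I. a i * bracket n v (f i) k :: 'k::field)"
  by (simp add: bracket_antisym[of n v] bracket_sum_left sum_negf)

lemma sum_unitv_mult: "finite S \<Longrightarrow> a \<in> S \<Longrightarrow> (\<Sum>x\<in>S. unitv a x * f x) = (f a :: 'k::field)"
  by (simp add: unitv_def if_distrib[of "\<lambda>t. t * _"] cong: if_cong)

lemma bracket_unitv:
  "p \<in> valid n \<Longrightarrow> q \<in> valid n \<Longrightarrow> bracket n (unitv p) (unitv q) = (brb p q :: idx \<Rightarrow> 'k::field)"
  by (simp add: fun_eq_iff bracket_def sum_unitv_mult mult.assoc flip: sum_distrib_left)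

lemma unitv_in_vec: "j \<in> valid n \<Longrightarrow> unitv j \<in> vec n"
  unfolding vec_def unitv_def by auto

section \<open>\<open>\<frakB>(B)\<close> is a basis\<close>

lemma Ebasis_in_Espace: "is_Ebasis n ep \<Longrightarrow> i \<in> {1..n} \<Longrightarrow> ep i \<in> Espace n"
  unfolding is_Ebasis_def by blast

lemma Ebasis_vanish:
  assumes "is_Ebasis n ep" "i \<in> {1..n}"
  shows "ep i A = 0" "ep i B = 0" "ep i X = 0" "ep i U = 0" "ep i Y = 0" "ep i C = 0" "ep i F = 0"
    "ep i H = 0" "ep i (W p q) = 0" "ep i (XI p) = 0" "ep i (UI p) = 0" "ep i (YI p) = 0"
  using Ebasis_in_Espace[OF assms] by (auto simp: Espace_def is_E_def)

lemma Ebasis_coeffs_eq_0: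
  assumes Eb: "is_Ebasis n ep" and comb: "\<And>p. p \<in> {1..n} \<Longrightarrow> (\<Sum>i=1..n. c i * ep i (E p)) = 0"
  shows "\<forall>i\<in>{1..n}. c i = 0"
proof -
  have "(\<Sum>i=1..n. c i * ep i k) = 0" for k
  proof (cases "\<exists>p\<in>{1..n}. k = E p")
    case True
    then show ?thesis using comb by auto
  next
    case not_E_range: False
    have "ep i k = 0" if i: "i \<in> {1..n}" for i
    proof (cases "is_E k")
      case True
      with not_E_range have "k \<notin> valid n" by (auto simp: is_E_def)
      then show ?thesis using Ebasis_in_Espace[OF Eb i] by (auto simp: Espace_def vec_def)
    next
      case False
      then show ?thesis using Ebasis_in_Espace[OF Eb i] by (auto simp: Espace_def)
    qed
    then show ?thesis by simp
  qed
  then show ?thesis using Eb unfolding is_Ebasis_def by blast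
qed

lemma Ebasis_inverse:
  assumes "is_Ebasis n ep"
  obtains Q where "\<forall>p\<in>{1..n}. unitv (E p) = (\<lambda>k. \<Sum>i=1..n. Q p i * ep i k)"
proof -
  have "\<exists>c. unitv (E p) = (\<lambda>k. \<Sum>i=1..n. c i * ep i k)" if "p \<in> {1..n}" for p
  proof -
    have "unitv (E p) \<in> Espace n"
      using that unitv_in_vec[of "E p" n] by (auto simp: Espace_def is_E_def unitv_def)
    then show ?thesis using assms unfolding is_Ebasis_def by blast
  qed
  then show ?thesis using that by metis
qed

lemma Ebasis_bilinear_coeffs_eq_0:
  assumes Eb: "is_Ebasis n ep"
    and comb: "\<forall>p\<in>{1..n}. \<forall>q\<in>{1..n}. (\<Sum>i=1..n. \<Sum>l=1..n. M i l * ep i (E p) * ep l (E q)) = 0"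
  shows "\<forall>i\<in>{1..n}. \<forall>l\<in>{1..n}. M i l = 0"
proof -
  have "\<forall>i\<in>{1..n}. (\<Sum>l=1..n. M i l * ep l (E q)) = 0" if "q \<in> {1..n}" for q
  proof (rule Ebasis_coeffs_eq_0[OF Eb])
    fix p assume "p \<in> {1..n}"
    then show "(\<Sum>i=1..n. (\<Sum>l=1..n. M i l * ep l (E q)) * ep i (E p)) = 0"
      using comb that by (simp add: sum_distrib_right sum_distrib_left mult_ac)
  qed
  then show ?thesis using Ebasis_coeffs_eq_0[OF Eb, of "M i" for i] by blast
qed

lemma Ebasis_wedge_coeffs_eq_0:
  assumes Eb: "is_Ebasis n ep"
    and comb: "\<forall>p q. 1 \<le> p \<longrightarrow> p < q \<longrightarrow> q \<le> n \<longrightarrow>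
      (\<Sum>i=1..n. \<Sum>l=1..n.
         if i < l then d i l * (ep i (E p) * ep l (E q) - ep i (E q) * ep l (E p)) else 0) = 0"
    and il: "1 \<le> i" "i < l" "l \<le> n"
  shows "d i l = 0"
proof -
  \<comment> \<open>Extended antisymmetrically, \<open>d\<close> turns the wedge combination into a bilinear one.\<close>
  define M where "M i l = (if i < l then d i l else if l < i then - d l i else 0)" for i l
  define R where "R p q = (\<Sum>i=1..n. \<Sum>l=1..n. M i l * ep i (E p) * ep l (E q))" for p q
  have R_eq: "R p q = (\<Sum>i=1..n. \<Sum>l=1..n.
      if i < l then d i l * (ep i (E p) * ep l (E q) - ep i (E q) * ep l (E p)) else 0)" for p q
  proof -
    have "R p q = (\<Sum>i=1..n. \<Sum>l=1..n. if i < l then d i l * ep i (E p) * ep l (E q) else 0)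
        + (\<Sum>i=1..n. \<Sum>l=1..n. if l < i then - d l i * ep i (E p) * ep l (E q) else 0)"
      unfolding R_def M_def sum.distrib[symmetric] by (intro sum.cong refl) auto
    also have "(\<Sum>i=1..n. \<Sum>l=1..n. if l < i then - d l i * ep i (E p) * ep l (E q) else 0)
        = (\<Sum>i=1..n. \<Sum>l=1..n. if i < l then - d i l * ep l (E p) * ep i (E q) else 0)"
      by (rule sum.swap)
    also have "(\<Sum>i=1..n. \<Sum>l=1..n. if i < l then d i l * ep i (E p) * ep l (E q) else 0)
        + (\<Sum>i=1..n. \<Sum>l=1..n. if i < l then - d i l * ep l (E p) * ep i (E q) else 0)
        = (\<Sum>i=1..n. \<Sum>l=1..n.
            if i < l then d i l * (ep i (E p) * ep l (E q) - ep i (E q) * ep l (E p)) else 0)"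
      unfolding sum.distrib[symmetric] by (intro sum.cong refl) (simp add: algebra_simps)
    finally show ?thesis .
  qed
  have R_upper: "R p q = 0" if "1 \<le> p" "p < q" "q \<le> n" for p q
    using comb that unfolding R_eq by blast
  have R_antisym: "R q p = - R p q" for p q
    unfolding R_eq sum_negf[symmetric] by (intro sum.cong refl) (simp add: algebra_simps)
  have "R p q = 0" if "p \<in> {1..n}" "q \<in> {1..n}" for p q
  proof -
    consider "p < q" | "p = q" | "q < p" by arith
    then show ?thesis
    proof cases
      case 1 then show ?thesis using R_upper that by simp
    next
      case 2 then show ?thesis
        unfolding R_eq by (simp only: diff_self mult_zero_right if_cancel sum.neutral_const)
    next
      case 3 then show ?thesis using R_upper[of q p] R_antisym[of p q] that by simp
    qed
  qed
  then have "M i l = 0" using Ebasis_bilinear_coeffs_eq_0[OF Eb] il unfolding R_def by auto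
  then show ?thesis using il unfolding M_def by simp
qed

definition lincomb :: "nat \<Rightarrow> (nat \<Rightarrow> idx \<Rightarrow> 'k::field) \<Rightarrow> (idx \<Rightarrow> 'k) \<Rightarrow> idx \<Rightarrow> 'k" where
  "lincomb n ep c = (\<lambda>k. \<Sum>j\<in>valid n. c j * newbasis n ep j k)"

definition represents :: "nat \<Rightarrow> (nat \<Rightarrow> idx \<Rightarrow> 'k::field) \<Rightarrow> (idx \<Rightarrow> 'k) \<Rightarrow> (idx \<Rightarrow> 'k) \<Rightarrow> bool" where
  "represents n ep w c \<longleftrightarrow> (\<forall>k. k \<notin> valid n \<longrightarrow> c k = 0) \<and> w = lincomb n ep c"

definition in_span :: "nat \<Rightarrow> (nat \<Rightarrow> idx \<Rightarrow> 'k::field) \<Rightarrow> (idx \<Rightarrow> 'k) \<Rightarrow> bool" where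
  "in_span n ep w \<longleftrightarrow> (\<exists>c. represents n ep w c)"

lemma coord_eq_The: "coord n ep w r = (THE c. represents n ep w c) r"
  unfolding coord_def represents_def lincomb_def ..

lemma lincomb_at_singleton:
  assumes "is_Ebasis n ep" and "r \<in> {A, B, X, U, Y, C, F, H}"
  shows "lincomb n ep c r = c r"
  using assms(2) by (auto simp: lincomb_def sum_valid bracket_at Ebasis_vanish[OF assms(1)] unitv_def
      cong: if_cong)

lemma lincomb_at_E:
  assumes "is_Ebasis n ep"
  shows "lincomb n ep c (E p) = (\<Sum>i=1..n. c (E i) * ep i (E p))"
  by (simp add: lincomb_def sum_valid bracket_at Ebasis_vanish[OF assms] unitv_def cong: if_cong)

lemma lincomb_at_XI_UI_YI:
  assumes "is_Ebasis n ep" and "p \<in> {1..n}"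
  shows "lincomb n ep c (XI p) = (\<Sum>i=1..n. c (XI i) * ep i (E p))"
    and "lincomb n ep c (UI p) = (\<Sum>i=1..n. c (UI i) * ep i (E p))"
    and "lincomb n ep c (YI p) = (\<Sum>i=1..n. c (YI i) * ep i (E p))"
  using assms(2)
  by (simp_all add: lincomb_def sum_valid bracket_at Ebasis_vanish[OF assms(1)] unitv_def cong: if_cong)

lemma lincomb_at_W:
  assumes "is_Ebasis n ep" and "1 \<le> p" "p < q" "q \<le> n"
  shows "lincomb n ep c (W p q) = (\<Sum>i=1..n. \<Sum>l=1..n.
      if i < l then c (W i l) * (ep i (E p) * ep l (E q) - ep i (E q) * ep l (E p)) else 0)"
  using assms(2-)
  by (simp add: lincomb_def sum_valid bracket_at Ebasis_vanish[OF assms(1)] unitv_def cong: if_cong)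

lemma lincomb_eq_0_imp_coeffs_eq_0:
  assumes Eb: "is_Ebasis n ep" and supp: "\<forall>k. k \<notin> valid n \<longrightarrow> c k = 0"
    and zero: "lincomb n ep c = (\<lambda>k. 0)"
  shows "c = (\<lambda>k. 0)"
proof
  fix j
  have zero_at: "lincomb n ep c k = 0" for k
    using zero by simp
  have "\<forall>i\<in>{1..n}. c (E i) = 0"
    by (rule Ebasis_coeffs_eq_0[OF Eb]) (metis zero_at lincomb_at_E[OF Eb])
  moreover have "\<forall>i\<in>{1..n}. c (T i) = 0" if "T \<in> {XI, UI, YI}" for T
  proof (rule Ebasis_coeffs_eq_0[OF Eb])
    fix p assume "p \<in> {1..n}"
    then show "(\<Sum>i=1..n. c (T i) * ep i (E p)) = 0"
      using that zero_at lincomb_at_XI_UI_YI[OF Eb, of p c] by auto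
  qed
  moreover have "c (W i l) = 0" if "1 \<le> i" "i < l" "l \<le> n" for i l
    using Ebasis_wedge_coeffs_eq_0[OF Eb _ that, where d = "\<lambda>i l. c (W i l)"]
      zero_at lincomb_at_W[OF Eb, of _ _ c] by simp
  moreover have "c r = 0" if "r \<in> {A, B, X, U, Y, C, F, H}" for r
    using zero_at lincomb_at_singleton[OF Eb that, of c] by simp
  ultimately show "c j = 0"
    using supp by (cases "j \<in> valid n") (auto simp: valid_def)
qed

lemma represents_unique:
  assumes Eb: "is_Ebasis n ep" and "represents n ep w c" and "represents n ep w c'"
  shows "c' = c"
proof -
  have "(\<lambda>k. c' k - c k) = (\<lambda>k. 0)"
  proof (rule lincomb_eq_0_imp_coeffs_eq_0[OF Eb])
    show "\<forall>k. k \<notin> valid n \<longrightarrow> c' k - c k = 0"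
      using assms(2,3) unfolding represents_def by auto
    have "lincomb n ep c' k - lincomb n ep c k = 0" for k
      using assms(2,3) unfolding represents_def by simp
    then show "lincomb n ep (\<lambda>k. c' k - c k) = (\<lambda>k. 0)"
      by (simp add: lincomb_def fun_eq_iff left_diff_distrib sum_subtractf)
  qed
  then show ?thesis by (simp add: fun_eq_iff)
qed

lemma in_span_newbasis: "j \<in> valid n \<Longrightarrow> in_span n ep (newbasis n ep j)"
  unfolding in_span_def represents_def lincomb_def
  by (rule exI[of _ "unitv j"]) (auto simp: unitv_def sum_unitv_mult[of _ j, unfolded unitv_def])

lemma in_span_lincomb:
  assumes "in_span n ep u" and "in_span n ep v"
  shows "in_span n ep (\<lambda>k. a * u k + b * v k)"
proof -
  obtain cu cv where "represents n ep u cu" and "represents n ep v cv"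
    using assms unfolding in_span_def by blast
  then have "represents n ep (\<lambda>k. a * u k + b * v k) (\<lambda>k. a * cu k + b * cv k)"
    unfolding represents_def lincomb_def
    by (auto simp: algebra_simps sum.distrib sum_distrib_left)
  then show ?thesis unfolding in_span_def by blast
qed

lemma in_span_zero: "in_span n ep (\<lambda>k. 0)"
  unfolding in_span_def represents_def lincomb_def by (rule exI[of _ "\<lambda>k. 0"]) simp

lemma in_span_sum:
  assumes "finite I" and "\<forall>i\<in>I. in_span n ep (f i)"
  shows "in_span n ep (\<lambda>k. \<Sum>i\<in>I. a i * f i k)"
  using assms
proof (induction I rule: finite_induct)
  case empty
  then show ?case using in_span_zero by simp
next
  case (insert x I)
  then have "in_span n ep (\<lambda>k. 1 * (\<Sum>i\<in>I. a i * f i k) + a x * f x k)"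
    by (intro in_span_lincomb) auto
  then show ?case using insert by (simp add: add.commute)
qed

lemma in_span_bracket_Ebasis:
  fixes ep :: "nat \<Rightarrow> idx \<Rightarrow> 'k::field_char_0"
  assumes "i \<in> {1..n}" and "j \<in> {1..n}"
  shows "in_span n ep (bracket n (ep i) (ep j))"
proof -
  consider "i < j" | "i = j" | "j < i" by arith
  then show ?thesis
  proof cases
    case 1
    then show ?thesis using in_span_newbasis[of "W i j" n ep] assms by simp
  next
    case 2
    have "bracket n (ep i) (ep i) = (\<lambda>k. 0)" by (simp add: fun_eq_iff bracket_self)
    with 2 show ?thesis using in_span_zero by simp
  next
    case 3
    then have "in_span n ep (\<lambda>k. (-1) * bracket n (ep j) (ep i) k + 0 * bracket n (ep j) (ep i) k)"
      using in_span_newbasis[of "W j i" n ep] assms by (intro in_span_lincomb) auto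
    then show ?thesis by (simp add: bracket_antisym[of n "ep j"])
  qed
qed

text \<open>The standard basis vectors are expressed through \<open>\<frakB>(B)\<close> by transporting the inverse
  change of basis \<open>e\<^sub>p = \<Sum>\<^sub>i Q\<^sub>p\<^sub>i e'\<^sub>i\<close> through the bracket.\<close>

lemma in_span_unitv:
  fixes ep :: "nat \<Rightarrow> idx \<Rightarrow> 'k::field_char_0"
  assumes Eb: "is_Ebasis n ep" and r: "r \<in> valid n"
  shows "in_span n ep (unitv r)"
proof -
  obtain Q where Q: "\<forall>p\<in>{1..n}. unitv (E p) = (\<lambda>k. \<Sum>i=1..n. Q p i * ep i k)"
    using Ebasis_inverse[OF Eb] by blast
  have ep_span: "\<forall>i\<in>{1..n}. in_span n ep (ep i)"
    using in_span_newbasis[of "E i" n ep for i] by auto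
  have E_span: "in_span n ep (unitv (E p))" if "p \<in> {1..n}" for p
    using Q that in_span_sum[OF _ ep_span, of "Q p"] by simp
  have gen_span: "in_span n ep (unitv (T p))"
    if "p \<in> {1..n}" and "(T, Z) \<in> {(XI, X), (UI, U), (YI, Y)}" for p T Z
  proof -
    have "unitv (T p) = bracket n (unitv (E p)) (unitv Z)"
      using that by (auto simp: bracket_unitv brb_simps)
    also have "\<dots> = (\<lambda>k. \<Sum>i=1..n. Q p i * bracket n (ep i) (unitv Z) k)"
      using that by (subst Q[rule_format, OF that(1)]) (simp add: fun_eq_iff bracket_sum_left)
    finally show ?thesis
      using that in_span_newbasis[of "T i" n ep for i] by (auto intro!: in_span_sum)
  qed
  have W_span: "in_span n ep (unitv (W p q))" if "p \<in> {1..n}" "q \<in> {1..n}" "p < q" for p q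
  proof -
    have "unitv (W p q) = bracket n (unitv (E p)) (unitv (E q))"
      using that by (auto simp: bracket_unitv brb_def)
    also have "\<dots> = (\<lambda>k. \<Sum>i=1..n. Q p i * (\<Sum>j=1..n. Q q j * bracket n (ep i) (ep j) k))"
      by (subst Q[rule_format, OF that(1)], subst Q[rule_format, OF that(2)])
        (simp add: fun_eq_iff bracket_sum_left bracket_sum_right)
    finally show ?thesis
      using in_span_bracket_Ebasis[where ep = ep and n = n] by (auto intro!: in_span_sum)
  qed
  have "in_span n ep (unitv r)" if "r \<in> {A, B, X, U, Y, C, F, H}"
    using that in_span_newbasis[of r n ep] by auto
  with r E_span gen_span W_span show ?thesis
    unfolding valid_def by auto
qed

lemma vec_eq_sum_unitv: "w \<in> vec n \<Longrightarrow> w = (\<lambda>k. \<Sum>r\<in>valid n. w r * unitv r k)"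
  by (auto simp: fun_eq_iff vec_def unitv_def if_distrib[of "\<lambda>t. _ * t"] cong: if_cong)

lemma ex1_represents:
  fixes ep :: "nat \<Rightarrow> idx \<Rightarrow> 'k::field_char_0"
  assumes Eb: "is_Ebasis n ep" and w: "w \<in> vec n"
  shows "\<exists>!c. represents n ep w c"
proof -
  have "in_span n ep w"
    using vec_eq_sum_unitv[OF w] in_span_sum[of "valid n" n ep unitv w] in_span_unitv[OF Eb]
    by simp
  then show ?thesis using represents_unique[OF Eb] unfolding in_span_def by blast
qed

lemma coord_represents:
  fixes ep :: "nat \<Rightarrow> idx \<Rightarrow> 'k::field_char_0"
  assumes "is_Ebasis n ep" and "w \<in> vec n"
  shows "represents n ep w (coord n ep w)"
  unfolding coord_eq_The by (rule theI'[OF ex1_represents[OF assms]])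

lemma coord_at_singleton:
  fixes ep :: "nat \<Rightarrow> idx \<Rightarrow> 'k::field_char_0"
  assumes Eb: "is_Ebasis n ep" and "w \<in> vec n" and "r \<in> {A, B, X, U, Y, C, F, H}"
  shows "coord n ep w r = w r"
  using coord_represents[OF Eb assms(2)] lincomb_at_singleton[OF Eb assms(3)]
  by (metis represents_def)

lemma coord_at_E_eq_0:
  fixes ep :: "nat \<Rightarrow> idx \<Rightarrow> 'k::field_char_0"
  assumes Eb: "is_Ebasis n ep" and "w \<in> vec n" and "\<forall>p. w (E p) = 0" and "i \<in> {1..n}"
  shows "coord n ep w (E i) = 0"
proof -
  have "w = lincomb n ep (coord n ep w)"
    using coord_represents[OF Eb assms(2)] by (simp add: represents_def)
  then have "(\<Sum>i=1..n. coord n ep w (E i) * ep i (E p)) = 0" for p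
    using assms(3) lincomb_at_E[OF Eb, of "coord n ep w" p] by metis
  then show ?thesis using Ebasis_coeffs_eq_0[OF Eb, of "\<lambda>i. coord n ep w (E i)"] assms(4) by blast
qed

section \<open>Derivations\<close>

lemma derivation_zero:
  assumes "is_derivation n D"
  shows "D (\<lambda>k. 0) = (\<lambda>k. 0 :: 'k::field)"
proof -
  have lin: "D (\<lambda>k. v k + c * w k) = (\<lambda>k. D v k + c * D w k)" if "v \<in> vec n" "w \<in> vec n" for v w c
    using assms that unfolding is_derivation_def by blast
  have "(\<lambda>k. 0 :: 'k) \<in> vec n" by (simp add: vec_def)
  from lin[OF this this, of "-1"] show ?thesis by (simp add: fun_eq_iff)
qed

lemma derivation_brb:
  assumes "is_derivation n D" and "p \<in> valid n" and "q \<in> valid n"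
  shows "D (brb p q) k = bracket n (D (unitv p)) (unitv q) k + bracket n (unitv p) (D (unitv q)) (k :: idx)"
proof -
  have "D (bracket n (unitv p) (unitv q)) = (\<lambda>k. bracket n (D (unitv p)) (unitv q) k
      + bracket n (unitv p) (D (unitv q)) k)"
    using assms(1) unitv_in_vec[OF assms(2)] unitv_in_vec[OF assms(3)]
    unfolding is_derivation_def by blast
  then show ?thesis by (simp add: bracket_unitv[OF assms(2,3)])
qed

lemma derivation_offdiag_eq_0:
  assumes der: "is_derivation n D" and "1 \<le> n"
  shows "D (unitv A) X = 0" "D (unitv B) X = 0" "D (unitv X) B = 0" "D (unitv U) Y = 0"
    "D (unitv Y) U = 0"
proof -
  note Leibniz = derivation_brb[OF der] and zero = derivation_zero[OF der]
  have E1: "E 1 \<in> valid n" using \<open>1 \<le> n\<close> by simp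
  show AX: "D (unitv A) X = 0" and "D (unitv B) X = 0"
    using Leibniz[OF E1, of A "XI 1"] Leibniz[OF E1, of B "XI 1"] \<open>1 \<le> n\<close>
    by (simp_all add: zero brb_simps bracket_at unitv_def)
  show "D (unitv X) B = 0"
    using Leibniz[of A X C] by (simp add: zero brb_simps bracket_at unitv_def)
  show "D (unitv U) Y = 0"
    using Leibniz[of A U F] AX by (simp add: zero brb_simps bracket_at unitv_def)
  have XA: "D (unitv X) A = 0"
    using Leibniz[of B X C] by (simp add: zero brb_simps bracket_at unitv_def)
  moreover have "D (unitv C) Y = 0"
    using Leibniz[of X C H] XA by (simp add: zero brb_simps bracket_at unitv_def)
  moreover have "D (unitv H) F = D (unitv X) A + D (unitv Y) U" "D (unitv H) F = D (unitv C) Y"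
    using Leibniz[of X Y F] Leibniz[of A C F] by (simp_all add: brb_simps bracket_at unitv_def)
  ultimately show "D (unitv Y) U = 0" by simp
qed

lemma derivation_diagonal_relations:
  assumes der: "is_derivation n D" and "1 \<le> n"
  defines "d \<equiv> \<lambda>r. D (unitv r) r"
  shows "d C = d A + d B" "d H = d A + d C" "d H = d B + d U" "d H = d B + d Y"
    "d H = d X + d Y" "d F = d A + d Y" "d F = d X + d U"
  using derivation_brb[OF der, of A B C] derivation_brb[OF der, of A C H]
    derivation_brb[OF der, of B U H] derivation_brb[OF der, of B Y H]
    derivation_brb[OF der, of X Y H] derivation_brb[OF der, of A Y F]
    derivation_brb[OF der, of X U F] derivation_offdiag_eq_0[OF assms(1,2)]
  by (simp_all add: d_def brb_simps bracket_at unitv_def)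

lemma diagonal_relations_solution:
  fixes a b x u y c f h :: "'a::comm_ring_1"
  assumes "c = a + b" "h = a + c" "h = b + u" "h = b + y" "h = x + y" "f = a + y" "f = x + u"
  shows "a = b \<and> b = x \<and> h = f \<and> f = 3 * a \<and> y = u \<and> u = c \<and> c = 2 * a"
proof -
  have "u = y" using assms(3,4) by simp
  moreover have "b = x" using assms(4,5) by simp
  moreover have "a = x" using assms(6,7) \<open>u = y\<close> by simp
  ultimately show ?thesis using assms(1-3,6) by (simp add: algebra_simps numeral_eq_Suc)
qed

lemma diagc_at_singleton:
  fixes ep :: "nat \<Rightarrow> idx \<Rightarrow> 'k::field_char_0"
  assumes "is_Ebasis n ep" and "is_derivation n D" and r: "r \<in> {A, B, X, U, Y, C, F, H}"
  shows "diagc n ep D r = D (unitv r) r"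
proof -
  have "newbasis n ep r = unitv r" and "r \<in> valid n" using r by auto
  moreover have "D (unitv r) \<in> vec n"
    using assms(2) unitv_in_vec[OF \<open>r \<in> valid n\<close>] unfolding is_derivation_def by blast
  ultimately show ?thesis unfolding diagc_def using coord_at_singleton[OF assms(1) _ r] by simp
qed

lemma diagc_at_E_eq_0:
  fixes ep :: "nat \<Rightarrow> idx \<Rightarrow> 'k::field_char_0"
  assumes "is_Ebasis n ep" and "Der1 n D" and "i \<in> {1..n}"
  shows "diagc n ep D (E i) = 0"
proof -
  have "ep i \<in> Espace n" using Ebasis_in_Espace[OF assms(1,3)] .
  then have "D (ep i) \<in> vec n" and "\<forall>p. D (ep i) (E p) = 0"
    using assms(2) by (auto simp: Der1_def is_derivation_def Espace_def is_E_def)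
  then show ?thesis unfolding diagc_def using coord_at_E_eq_0[OF assms(1) _ _ assms(3)] by simp
qed

theorem mainTheorem3:
  fixes n :: nat and ep :: "nat \<Rightarrow> idx \<Rightarrow> 'k::field_char_0"
    and D :: "(idx \<Rightarrow> 'k) \<Rightarrow> (idx \<Rightarrow> 'k)"
  assumes "n \<ge> 1" and "is_Ebasis n ep" and "Der1 n D"
  shows "(\<forall>i\<in>{1..n}. diagc n ep D (E i) = 0)
       \<and> (diagc n ep D A = diagc n ep D B \<and> diagc n ep D B = diagc n ep D X)
       \<and> (diagc n ep D H = diagc n ep D F \<and> diagc n ep D F = 3 * diagc n ep D A)
       \<and> (diagc n ep D Y = diagc n ep D U \<and> diagc n ep D U = diagc n ep D C
          \<and> diagc n ep D C = 2 * diagc n ep D A)"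
proof -
  have der: "is_derivation n D" using assms(3) unfolding Der1_def by blast
  have "diagc n ep D r = D (unitv r) r" if "r \<in> {A, B, X, U, Y, C, F, H}" for r
    using diagc_at_singleton[OF assms(2) der that] .
  moreover have "D (unitv A) A = D (unitv B) B \<and> D (unitv B) B = D (unitv X) X
      \<and> D (unitv H) H = D (unitv F) F \<and> D (unitv F) F = 3 * D (unitv A) A
      \<and> D (unitv Y) Y = D (unitv U) U \<and> D (unitv U) U = D (unitv C) C
      \<and> D (unitv C) C = 2 * D (unitv A) A"
    by (rule diagonal_relations_solution[OF derivation_diagonal_relations[OF der assms(1)]])
  ultimately show ?thesis using diagc_at_E_eq_0[OF assms(2,3)] by simp
qed

end
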